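(* Let $\mathcal N$ be a monotonic max-sum $(\mathrm{Col},\delta)$-GNN with $L$ layers and aggregation parameters $k_1,\dots,k_L$, and let $C_1,\dots,C_L$ be its layer capacities. Let $\mathcal N'$ be the $(\mathrm{Col},\delta)$-GNN obtained from $\mathcal N$ by replacing each $k_\ell$ by $C_\ell$ (i.e. using $\mathrm{maxsum}_{C_\ell}$ as aggregation in layer $\ell$), leaving everything else unchanged. Then $T_{\mathcal N}(D)=T_{\mathcal N'}(D)$ for every $(\mathrm{Col},\delta)$-dataset $D$.
   Context: Graphs and GNNs. For a finite set of colours $\mathrm{Col}$ and $\delta\in\mathbb N$, a $(\mathrm{Col},\delta)$-graph is $G=\langle V,\{E^c\}_{c\in\mathrm{Col}},\lambda\rangle$ where $V$ is a finite set of vertices, $E^c\subseteq V\times V$ for each colour $c$, and $\lambda$ assigns to each $v\in V$ a feature vector $\mathbf v\in\mathbb R^\delta$; it is Boolean if all feature entries are in $\{0,1\}$. A $(\mathrm{Col},\delta)$-GNN $\mathcal N$ with $L\ge 1$ layers consists of dimensions $\delta_0=\delta,\delta_1,\dots,\delta_{L-1},\delta_L=\delta$; real matrices $A_\ell$ and $B_\ell^c$ of size $\delta_\ell\times\delta_{\ell-1}$ and bias vectors $b_\ell\in\mathbb R^{\delta_\ell}$ for $1\le\ell\le L$, $c\in\mathrm{Col}$; aggregation functions $\mathrm{agg}_\ell$ from finite real multisets to $\mathbb R$ (applied componentwise to finite multisets of vectors); an activation function $\sigma:\mathbb R\to\mathbb R$ and a classification function $\mathrm{cls}:\mathbb R\to\{0,1\}$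 (both applied componentwise). Applying $\mathcal N$ to $G$ produces labellings $\lambda_0=\lambda,\lambda_1,\dots,\lambda_L$ where, writing $\mathbf v_\ell$ for the vector of $v$ under $\lambda_\ell$, $\mathbf v_\ell=\sigma\big(A_\ell\mathbf v_{\ell-1}+\sum_{c\in\mathrm{Col}}B_\ell^c\,\mathrm{agg}_\ell(\{\!\{\mathbf u_{\ell-1}\mid (v,u)\in E^c\}\!\})+b_\ell\big)$. The result $\mathcal N(G)$ is the Boolean graph with the same vertices and edges where each $v$ is labelled by $\mathrm{cls}(\mathbf v_L)$. Canonical transformation. The $(\mathrm{Col},\delta)$-signature consists of a binary predicate $E^c$ for each $c\in\mathrm{Col}$ and unary predicates $U_1,\dots,U_\delta$; a $(\mathrm{Col},\delta)$-dataset is a finite set of variable-free atoms (facts) over this signature. Its canonical encoding $\mathrm{enc}(D)$ is the Boolean $(\mathrm{Col},\delta)$-graph with a vertex $v_t$ for each term $t$ occurring in $D$, an edge $(v_t,v_s)\in E^c$ iff $E^c(t,s)\in D$, and feature vectors with $i$-th component $1$ if $U_i(t)\in D$ and $0$ otherwise. The canonical decoding $\mathrm{dec}(G)$ of a Boolean graph whose vertices are of the form $v_t$ contains $E^c(t,s)$ for each edge $(v_t,v_s)\in E^c$ and $U_i(t)$ for each vertex $v_t$ whose $i$-th feature is $1$. Then $T_{\mathcal N}(D)=\mathrm{dec}(\mathcal N(\mathrm{enc}(D)))$. Max-sum aggregation. For $k\in\mathbb N_0\cup\{\infty\}$ and a finite real multiset $S$, let $m=\min(k,|S|)$; $\mathrm{maxsum}_k(S)=0$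 if $m=0$, and otherwise it is the sum of the $m$ largest elements of $S$, counting multiplicities. Monotonic max-sum GNN: a $(\mathrm{Col},\delta)$-GNN such that (i) all entries of every $A_\ell$ and $B_\ell^c$ are nonnegative; (ii) each $\mathrm{agg}_\ell$ is $\mathrm{maxsum}_{k_\ell}$ for some $k_\ell\in\mathbb N_0\cup\{\infty\}$; (iii) $\sigma$ is monotonically increasing, unbounded, and has range $\mathbb R_{\ge0}$; (iv) $\mathrm{cls}$ is a step function with some threshold $t\in\mathbb R$: $\mathrm{cls}(t')=0$ for $t'<t$ and $\mathrm{cls}(t')=1$ for $t'\ge t$. Sets $X_\ell^i$. A $(\mathrm{Col},\ell)$-multiset family $\mathcal Y$ assigns to each $c\in\mathrm{Col}$ a finite multiset $\mathcal Y^c$ of vectors of dimension $\delta_\ell$. For $1\le\ell\le L$, $1\le i\le\delta_\ell$, a vector $\mathbf x$ of dimension $\delta_{\ell-1}$ and a $(\mathrm{Col},\ell-1)$-multiset family $\mathcal Y$, let $\mathrm{Val}_\ell^i(\mathbf x,\mathcal Y)$ be the $i$-th component of $A_\ell\mathbf x+\sum_{c}B_\ell^c\,\mathrm{maxsum}_{k_\ell}(\mathcal Y^c)+b_\ell$. Define $X_0^i=\{0,1\}$ for $1\le i\le\delta_0$, and for $\ell\ge1$ let $X_\ell^i$ be the set of all values $\sigma(\mathrm{Val}_\ell^i(\mathbf x,\mathcal Y))$ where $\mathbf x$ ranges over vectors of dimension $\delta_{\ell-1}$ with $x_j\in X_{\ell-1}^j$ for all $j$, and $\mathcal Y$ ranges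 over $(\mathrm{Col},\ell-1)$-multiset families such that $y_j\in X_{\ell-1}^j$ for all $c$, all $\mathbf y\in\mathcal Y^c$ and all $j$. (Each $X_\ell^i\subseteq\mathbb R_{\ge0}$ and has a least nonzero element whenever it contains a nonzero element.) Capacities. Let $\alpha_L$ be the threshold of $\mathrm{cls}$. For $\ell=L,L-1,\dots,1$ in turn: let $w_\ell$ be the least nonzero entry among all entries of $A_\ell$ and of all $B_\ell^c$, and let $x_\ell$ be the least nonzero number in $\bigcup_i X_{\ell-1}^i$. If $w_\ell$ or $x_\ell$ does not exist, set $C_\ell=C_{\ell-1}=\dots=C_1=0$ and stop. Otherwise let $\beta_\ell$ be the least natural number with $\sigma(\beta_\ell)\ge\alpha_\ell$, let $b_\ell^{\min}$ be the least entry of $b_\ell$, set $C_\ell=\min\big(k_\ell,\lceil(\beta_\ell-b_\ell^{\min})/(w_\ell\cdot x_\ell)\rceil\big)$ and $\alpha_{\ell-1}=(\beta_\ell-b_\ell^{\min})/w_\ell$, and continue with $\ell-1$. The capacity of $\mathcal N$ is $C_{\mathcal N}=\max(C_1,\dots,C_L)$. *)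

theory Defs
  imports Complex_Main "HOL-Library.Multiset" "HOL-Library.Extended_Nat"
begin

definition maxsum :: "enat \<Rightarrow> real multiset \<Rightarrow> real" where
  "maxsum k S = (case k of
      \<infinity> \<Rightarrow> sum_mset S
    | enat n \<Rightarrow> sum_list (take n (rev (sorted_list_of_multiset S))))"

text \<open>A (Col,delta)-graph: vertex set, one edge relation per colour (type 'c, finite),
  feature vectors as functions nat => real, components 0..<delta (component i is the
  (i+1)-th feature of the paper).\<close>
record ('c, 'v) graph =
  verts :: "'v set"
  edges :: "'c \<Rightarrow> ('v \<times> 'v) set"
  label :: "'v \<Rightarrow> nat \<Rightarrow> real"

text \<open>Layer l (1 \<le> l \<le> layers) has matrices A l (dim l x dim (l-1)), B l c, bias l,
  aggregation function agg l; activation act; classification cls (value True = 1).\<close>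
record 'c gnn =
  layers :: nat
  dim :: "nat \<Rightarrow> nat"
  A :: "nat \<Rightarrow> nat \<Rightarrow> nat \<Rightarrow> real"
  B :: "nat \<Rightarrow> 'c \<Rightarrow> nat \<Rightarrow> nat \<Rightarrow> real"
  bias :: "nat \<Rightarrow> nat \<Rightarrow> real"
  agg :: "nat \<Rightarrow> real multiset \<Rightarrow> real"
  act :: "real \<Rightarrow> real"
  cls :: "real \<Rightarrow> bool"

definition is_gnn :: "'c gnn \<Rightarrow> nat \<Rightarrow> bool" where
  "is_gnn N \<delta> \<longleftrightarrow> layers N \<ge> 1 \<and> dim N 0 = \<delta> \<and> dim N (layers N) = \<delta>"

primrec run :: "('c::finite) gnn \<Rightarrow> ('c, 'v) graph \<Rightarrow> nat \<Rightarrow> 'v \<Rightarrow> nat \<Rightarrow> real" where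
  "run N G 0 = label G"
| "run N G (Suc l) = (\<lambda>v i. if i < dim N (Suc l) then
      act N ((\<Sum>j<dim N l. A N (Suc l) i j * run N G l v j)
        + (\<Sum>c\<in>UNIV. \<Sum>j<dim N l. B N (Suc l) c i j *
              agg N (Suc l) (image_mset (\<lambda>u. run N G l u j) (mset_set {u. (v, u) \<in> edges G c})))
        + bias N (Suc l) i)
    else 0)"

definition apply_gnn :: "('c::finite) gnn \<Rightarrow> ('c, 'v) graph \<Rightarrow> ('c, 'v) graph" where
  "apply_gnn N G = \<lparr> verts = verts G, edges = edges G,
     label = (\<lambda>v i. if i < dim N (layers N) \<and> cls N (run N G (layers N) v i) then 1 else 0) \<rparr>"

text \<open>Facts: E^c(t,s) and U_i(t); here Un_at i t with i < delta stands for U_{i+1}(t).\<close>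
datatype ('c, 'a) fact = E_at 'c 'a 'a | Un_at nat 'a

definition is_dataset :: "nat \<Rightarrow> ('c, 'a) fact set \<Rightarrow> bool" where
  "is_dataset \<delta> D \<longleftrightarrow> finite D \<and> (\<forall>i t. Un_at i t \<in> D \<longrightarrow> i < \<delta>)"

definition terms :: "('c, 'a) fact set \<Rightarrow> 'a set" where
  "terms D = {t. \<exists>c s. E_at c t s \<in> D \<or> E_at c s t \<in> D} \<union> {t. \<exists>i. Un_at i t \<in> D}"

text \<open>Vertex v_t is identified with the term t.\<close>
definition enc :: "nat \<Rightarrow> ('c, 'a) fact set \<Rightarrow> ('c, 'a) graph" where
  "enc \<delta> D = \<lparr> verts = terms D, edges = (\<lambda>c. {(t, s). E_at c t s \<in> D}),
     label = (\<lambda>t i. if i < \<delta> \<and> Un_at i t \<in> D then 1 else 0) \<rparr>"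

definition dec :: "nat \<Rightarrow> ('c, 'a) graph \<Rightarrow> ('c, 'a) fact set" where
  "dec \<delta> G = {E_at c t s | c t s. (t, s) \<in> edges G c}
     \<union> {Un_at i t | i t. t \<in> verts G \<and> i < \<delta> \<and> label G t i = 1}"

definition T :: "('c::finite) gnn \<Rightarrow> nat \<Rightarrow> ('c, 'a) fact set \<Rightarrow> ('c, 'a) fact set" where
  "T N \<delta> D = dec \<delta> (apply_gnn N (enc \<delta> D))"

definition monotonic_maxsum :: "('c::finite) gnn \<Rightarrow> nat \<Rightarrow> (nat \<Rightarrow> enat) \<Rightarrow> real \<Rightarrow> bool" where
  "monotonic_maxsum N \<delta> k t \<longleftrightarrow> is_gnn N \<delta>
     \<and> (\<forall>l\<in>{1..layers N}. \<forall>i<dim N l. \<forall>j<dim N (l - 1).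
          A N l i j \<ge> 0 \<and> (\<forall>c. B N l c i j \<ge> 0))
     \<and> (\<forall>l\<in>{1..layers N}. agg N l = maxsum (k l))
     \<and> mono (act N) \<and> \<not> bdd_above (range (act N)) \<and> range (act N) = {0..}
     \<and> (\<forall>x. cls N x \<longleftrightarrow> x \<ge> t)"

definition Val :: "('c::finite) gnn \<Rightarrow> (nat \<Rightarrow> enat) \<Rightarrow> nat \<Rightarrow> nat \<Rightarrow> (nat \<Rightarrow> real)
    \<Rightarrow> ('c \<Rightarrow> (nat \<Rightarrow> real) multiset) \<Rightarrow> real" where
  "Val N k l i x Y = (\<Sum>j<dim N (l - 1). A N l i j * x j)
     + (\<Sum>c\<in>UNIV. \<Sum>j<dim N (l - 1). B N l c i j * maxsum (k l) (image_mset (\<lambda>y. y j) (Y c)))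
     + bias N l i"

primrec Xset :: "('c::finite) gnn \<Rightarrow> (nat \<Rightarrow> enat) \<Rightarrow> nat \<Rightarrow> nat \<Rightarrow> real set" where
  "Xset N k 0 i = {0, 1}"
| "Xset N k (Suc l) i = {act N (Val N k (Suc l) i x Y) | x Y.
      (\<forall>j<dim N l. x j \<in> Xset N k l j)
    \<and> (\<forall>c y j. y \<in># Y c \<and> j < dim N l \<longrightarrow> y j \<in> Xset N k l j)}"

definition has_lnz :: "real set \<Rightarrow> bool" where
  "has_lnz S \<longleftrightarrow> (\<exists>x\<in>S - {0}. \<forall>y\<in>S - {0}. x \<le> y)"

definition lnz :: "real set \<Rightarrow> real" where
  "lnz S = (THE x. x \<in> S - {0} \<and> (\<forall>y\<in>S - {0}. x \<le> y))"

definition weights :: "('c::finite) gnn \<Rightarrow> nat \<Rightarrow> real set" where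
  "weights N l = {A N l i j | i j. i < dim N l \<and> j < dim N (l - 1)}
     \<union> {B N l c i j | c i j. i < dim N l \<and> j < dim N (l - 1)}"

definition xs_set :: "('c::finite) gnn \<Rightarrow> (nat \<Rightarrow> enat) \<Rightarrow> nat \<Rightarrow> real set" where
  "xs_set N k l = (\<Union>i<dim N (l - 1). Xset N k (l - 1) i)"

definition cap_ok :: "('c::finite) gnn \<Rightarrow> (nat \<Rightarrow> enat) \<Rightarrow> nat \<Rightarrow> bool" where
  "cap_ok N k l \<longleftrightarrow> has_lnz (weights N l) \<and> has_lnz (xs_set N k l)"

definition beta :: "('c::finite) gnn \<Rightarrow> real \<Rightarrow> nat" where
  "beta N \<alpha> = (LEAST n::nat. act N (real n) \<ge> \<alpha>)"

definition bmin :: "('c::finite) gnn \<Rightarrow> nat \<Rightarrow> real" where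
  "bmin N l = Min {bias N l i | i. i < dim N l}"

text \<open>alpha_step N k t m = alpha_{L-m} (None once the procedure has stopped).\<close>
primrec alpha_step :: "('c::finite) gnn \<Rightarrow> (nat \<Rightarrow> enat) \<Rightarrow> real \<Rightarrow> nat \<Rightarrow> real option" where
  "alpha_step N k t 0 = Some t"
| "alpha_step N k t (Suc m) = (case alpha_step N k t m of
      None \<Rightarrow> None
    | Some a \<Rightarrow> (let l = layers N - m in
        if cap_ok N k l then Some ((real (beta N a) - bmin N l) / lnz (weights N l)) else None))"

text \<open>C_l for 1 \<le> l \<le> L (a negative ceiling is read as 0).\<close>
definition cap :: "('c::finite) gnn \<Rightarrow> (nat \<Rightarrow> enat) \<Rightarrow> real \<Rightarrow> nat \<Rightarrow> enat" where
  "cap N k t l = (case alpha_step N k t (layers N - l) of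
      None \<Rightarrow> 0
    | Some a \<Rightarrow> (if cap_ok N k l then
        min (k l) (enat (nat \<lceil>(real (beta N a) - bmin N l) / (lnz (weights N l) * lnz (xs_set N k l))\<rceil>))
       else 0))"

end

theory Submission
  imports Defs
begin

text \<open>
  Run the original network and the capped one side by side. Going down from the output, the
  capacity procedure produces thresholds \<open>\<alpha>\<^sub>L = t, \<alpha>\<^sub>L\<^sub>-\<^sub>1, \<dots>\<close>, and layer by layer each
  component of the two networks either coincides or is at least \<open>\<alpha>\<^sub>\<ell>\<close> in both. For the step,
  every summand of the pre-activation is nonnegative, and a summand that differs already pushes
  both pre-activations to \<open>\<beta>\<^sub>\<ell>\<close>: a nonzero weight is at least \<open>w\<^sub>\<ell>\<close>, a differing argument is at
  least \<open>\<alpha>\<^sub>\<ell>\<^sub>-\<^sub>1\<close>, and an aggregation truncated at \<open>C\<^sub>\<ell>\<close> only differs from the untruncated one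
  if it sums \<open>C\<^sub>\<ell>\<close> nonzero values, each at least \<open>x\<^sub>\<ell>\<close>. Applied at the output layer with
  threshold \<open>t\<close>, the classifications agree. The least nonzero elements exist because the
  reachable feature values have only finitely many elements below every bound.
\<close>

subsection \<open>Max-sum aggregation of nonnegative values\<close>

lemma sorted_desc_nonneg_split:
  fixes xs :: "real list"
  assumes "sorted_wrt (\<ge>) xs" "\<forall>x\<in>set xs. 0 \<le> x"
  shows "xs = filter (\<lambda>y. y \<noteq> 0) xs @ filter (\<lambda>y. y = 0) xs"
  using assms
proof (induction xs)
  case (Cons a xs)
  show ?case
  proof (cases "a = 0")
    case True
    then have "\<forall>x\<in>set xs. x = 0" using Cons.prems by force
    then show ?thesis using True by (simp add: filter_id_conv)
  qed (use Cons in simp)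
qed simp

lemma maxsum_positive_part:
  assumes "\<forall>y\<in>#Y. 0 \<le> y"
  obtains P where "mset P = filter_mset (\<lambda>y. y \<noteq> 0) Y" "sorted_wrt (\<ge>) P" "\<forall>q\<in>set P. 0 < q"
    "\<forall>n. maxsum (enat n) Y = sum_list (take n P)" "maxsum \<infinity> Y = sum_list P"
proof -
  define xs where "xs = rev (sorted_list_of_multiset Y)"
  have sorted: "sorted_wrt (\<ge>) xs"
    unfolding xs_def sorted_wrt_rev using sorted_sorted_list_of_multiset[of Y] by simp
  have nonneg: "\<forall>x\<in>set xs. 0 \<le> x" using assms by (simp add: xs_def)
  define P where "P = filter (\<lambda>y. y \<noteq> 0) xs"
  define Z where "Z = filter (\<lambda>y. y = 0) xs"
  have split: "xs = P @ Z" using sorted_desc_nonneg_split[OF sorted nonneg] by (simp add: P_def Z_def)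
  have zero_sum: "sum_list zs = 0" if "\<forall>z\<in>set zs. z = 0" for zs :: "real list"
    using that by (induction zs) auto
  have Z: "sum_list (take m Z) = 0" for m
    using set_take_subset[of m Z] by (intro zero_sum) (auto simp: Z_def)
  have "mset xs = Y" by (simp add: xs_def)
  show thesis
  proof
    show "mset P = filter_mset (\<lambda>y. y \<noteq> 0) Y" using \<open>mset xs = Y\<close> by (auto simp: P_def)
    show "sorted_wrt (\<ge>) P" using sorted by (simp add: P_def sorted_wrt_filter)
    show "\<forall>q\<in>set P. 0 < q" using nonneg by (auto simp: P_def)
    show "\<forall>n. maxsum (enat n) Y = sum_list (take n P)"
      using Z by (simp add: maxsum_def xs_def[symmetric] split take_append)
    have "sum_mset Y = sum_list xs" using \<open>mset xs = Y\<close> by (metis sum_mset_sum_list)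
    then show "maxsum \<infinity> Y = sum_list P" using Z[of "length Z"] split by (simp add: maxsum_def)
  qed
qed

lemma sum_list_take_mono_nonneg:
  fixes P :: "real list"
  assumes "\<forall>q\<in>set P. 0 \<le> q" "m \<le> n"
  shows "sum_list (take m P) \<le> sum_list (take n P)"
proof -
  have "take n P = take m P @ take (n - m) (drop m P)"
    using assms(2) by (metis le_add_diff_inverse take_add)
  moreover have "0 \<le> sum_list (take (n - m) (drop m P))"
    using assms(1) by (meson in_set_dropD in_set_takeD sum_list_nonneg)
  ultimately show ?thesis by simp
qed

lemma length_mult_le_sum_list:
  fixes P :: "real list"
  assumes "\<forall>q\<in>set P. x \<le> q"
  shows "real (length P) * x \<le> sum_list P"
  using assms by (induction P) (auto simp: algebra_simps)

lemma maxsum_zero [simp]: "maxsum 0 Y = 0"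
  by (simp add: maxsum_def zero_enat_def)

lemma maxsum_empty [simp]: "maxsum k {#} = 0"
  by (simp add: maxsum_def split: enat.splits)

lemma maxsum_eq_sum_list_positive:
  assumes "\<forall>y\<in>#Y. 0 \<le> y"
  obtains Q where "maxsum k Y = sum_list Q" "set Q \<subseteq> set_mset Y" "\<forall>q\<in>set Q. 0 < q"
proof -
  obtain P where P: "mset P = filter_mset (\<lambda>y. y \<noteq> 0) Y" "sorted_wrt (\<ge>) P" "\<forall>q\<in>set P. 0 < q"
    "\<forall>n. maxsum (enat n) Y = sum_list (take n P)" "maxsum \<infinity> Y = sum_list P"
    by (rule maxsum_positive_part[OF assms])
  have PY: "set P \<subseteq> set_mset Y"
    using arg_cong[OF P(1), of set_mset] by simp
  obtain n where "maxsum k Y = sum_list (take n P)"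
  proof (cases k)
    case infinity
    then show thesis using that[of "length P"] P(5) by simp
  qed (use that P(4) in simp)
  moreover have "set (take n P) \<subseteq> set P" by (rule set_take_subset)
  ultimately show thesis using that P(3) PY by blast
qed

lemma maxsum_nonneg:
  assumes "\<forall>y\<in>#Y. 0 \<le> y"
  shows "0 \<le> maxsum k Y"
proof -
  obtain Q where "maxsum k Y = sum_list Q" "set Q \<subseteq> set_mset Y" "\<forall>q\<in>set Q. 0 < q"
    by (rule maxsum_eq_sum_list_positive[OF assms])
  then show ?thesis by (simp add: less_imp_le sum_list_nonneg)
qed

lemma maxsum_mono:
  assumes "\<forall>y\<in>#Y. 0 \<le> y" "C \<le> k"
  shows "maxsum C Y \<le> maxsum k Y"
proof -
  obtain P where P: "mset P = filter_mset (\<lambda>y. y \<noteq> 0) Y" "sorted_wrt (\<ge>) P" "\<forall>q\<in>set P. 0 < q"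
    "\<forall>n. maxsum (enat n) Y = sum_list (take n P)" "maxsum \<infinity> Y = sum_list P"
    by (rule maxsum_positive_part[OF assms(1)])
  have P0: "\<forall>q\<in>set P. 0 \<le> q" using P(3) by auto
  show ?thesis
  proof (cases C)
    case C: (enat m)
    show ?thesis
    proof (cases k)
      case (enat n)
      then show ?thesis using P(4) sum_list_take_mono_nonneg[OF P0] assms(2) C by simp
    next
      case infinity
      then show ?thesis using P(4,5) sum_list_take_mono_nonneg[OF P0, of m "m + length P"] C by simp
    qed
  qed (use assms(2) in simp)
qed

lemma maxsum_ge_member:
  assumes "\<forall>y\<in>#Y. 0 \<le> y" "k \<noteq> 0" "y \<in># Y"
  shows "y \<le> maxsum k Y"
proof -
  have "maxsum (enat 1) Y \<le> maxsum k Y"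
    using maxsum_mono[OF assms(1)] assms(2) by (cases k) (auto simp: zero_enat_def)
  moreover have "y \<le> maxsum (enat 1) Y"
  proof (cases "y = 0")
    case True
    then show ?thesis using maxsum_nonneg[OF assms(1)] by simp
  next
    case False
  obtain P where P: "mset P = filter_mset (\<lambda>y. y \<noteq> 0) Y" "sorted_wrt (\<ge>) P" "\<forall>q\<in>set P. 0 < q"
    "\<forall>n. maxsum (enat n) Y = sum_list (take n P)" "maxsum \<infinity> Y = sum_list P"
    by (rule maxsum_positive_part[OF assms(1)])
    have "y \<in> set P" using arg_cong[OF P(1), of set_mset] False assms(3) by auto
    then obtain a P' where "P = a # P'" "y \<le> a" using P(2) by (cases P) auto
    then show ?thesis using P(4)[rule_format, of 1] by simp
  qed
  ultimately show ?thesis by simp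
qed

lemma maxsum_ge_count:
  assumes "\<forall>y\<in>#Y. 0 \<le> y" "n \<le> size (filter_mset (\<lambda>y. y \<noteq> 0) Y)"
    "\<forall>y\<in>#Y. y \<noteq> 0 \<longrightarrow> x \<le> y"
  shows "real n * x \<le> maxsum (enat n) Y"
proof -
  obtain P where P: "mset P = filter_mset (\<lambda>y. y \<noteq> 0) Y" "sorted_wrt (\<ge>) P" "\<forall>q\<in>set P. 0 < q"
    "\<forall>n. maxsum (enat n) Y = sum_list (take n P)" "maxsum \<infinity> Y = sum_list P"
    by (rule maxsum_positive_part[OF assms(1)])
  have "length (take n P) = n" using assms(2) arg_cong[OF P(1), of size] by simp
  moreover have "\<forall>q\<in>set (take n P). x \<le> q"
    using assms(3) arg_cong[OF P(1), of set_mset] by (auto dest: in_set_takeD)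
  ultimately show ?thesis using length_mult_le_sum_list[of "take n P" x] P(4) by simp
qed

lemma maxsum_saturated:
  assumes "\<forall>y\<in>#Y. 0 \<le> y" "size (filter_mset (\<lambda>y. y \<noteq> 0) Y) < n" "enat n \<le> k"
  shows "maxsum (enat n) Y = maxsum k Y"
proof -
  obtain P where P: "mset P = filter_mset (\<lambda>y. y \<noteq> 0) Y" "sorted_wrt (\<ge>) P" "\<forall>q\<in>set P. 0 < q"
    "\<forall>n. maxsum (enat n) Y = sum_list (take n P)" "maxsum \<infinity> Y = sum_list P"
    by (rule maxsum_positive_part[OF assms(1)])
  have "length P < n" using assms(2) arg_cong[OF P(1), of size] by simp
  then show ?thesis using P(4,5) assms(3) by (cases k) auto
qed

lemma maxsum_all_zero:
  assumes "\<forall>y\<in>#Y. y = 0"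
  shows "maxsum k Y = 0"
proof -
  obtain P where P: "mset P = filter_mset (\<lambda>y. y \<noteq> 0) Y" "sorted_wrt (\<ge>) P" "\<forall>q\<in>set P. 0 < q"
    "\<forall>n. maxsum (enat n) Y = sum_list (take n P)" "maxsum \<infinity> Y = sum_list P"
    by (rule maxsum_positive_part[of Y]) (use assms in auto)
  have "mset P = {#}" using P(1) assms by (simp add: filter_mset_eq_mempty_iff)
  then have "P = []" by simp
  then show ?thesis using P(4,5) by (cases k) auto
qed

subsection \<open>Agreement up to a threshold\<close>

definition agree_or_above :: "real \<Rightarrow> real \<Rightarrow> real \<Rightarrow> bool" where
  "agree_or_above \<alpha> x y \<longleftrightarrow> x = y \<or> (\<alpha> \<le> x \<and> \<alpha> \<le> y)"

lemma agree_or_above_refl [simp]: "agree_or_above \<alpha> x x"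
  by (simp add: agree_or_above_def)

lemma agree_or_above_threshold_mono:
  "agree_or_above \<alpha> x y \<Longrightarrow> \<alpha>' \<le> \<alpha> \<Longrightarrow> agree_or_above \<alpha>' x y"
  by (auto simp: agree_or_above_def)

lemma agree_or_above_add:
  fixes x x' y y' :: real
  assumes "agree_or_above \<alpha> x x'" "agree_or_above \<alpha> y y'" "0 \<le> x" "0 \<le> x'" "0 \<le> y" "0 \<le> y'"
  shows "agree_or_above \<alpha> (x + y) (x' + y')"
  using assms by (auto simp: agree_or_above_def)

lemma agree_or_above_sum:
  assumes "finite I" "\<forall>i\<in>I. agree_or_above \<alpha> (f i) (g i) \<and> 0 \<le> f i \<and> 0 \<le> g i"
  shows "agree_or_above \<alpha> (\<Sum>i\<in>I. f i) (\<Sum>i\<in>I. g i)"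
  using assms
proof (induction I rule: finite_induct)
  case (insert i I)
  then show ?case by (simp add: agree_or_above_add sum_nonneg)
qed simp

lemma agree_or_above_add_const:
  "agree_or_above \<alpha> x y \<Longrightarrow> agree_or_above (\<alpha> + c) (x + c) (y + c)"
  by (auto simp: agree_or_above_def)

lemma agree_or_above_mono_fun:
  "mono f \<Longrightarrow> agree_or_above \<alpha> x y \<Longrightarrow> agree_or_above (f \<alpha>) (f x) (f y)"
  by (auto simp: agree_or_above_def mono_def)

lemma agree_or_above_scale:
  fixes b w x y :: real
  assumes "agree_or_above \<alpha> x y" "0 < w" "b = 0 \<or> w \<le> b" "0 \<le> x" "0 \<le> y"
  shows "agree_or_above (w * \<alpha>) (b * x) (b * y)"
proof (cases "b = 0 \<or> x = y")
  case False
  then have "\<alpha> \<le> x" "\<alpha> \<le> y" "w \<le> b" using assms(1,3) by (auto simp: agree_or_above_def)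
  have "w * \<alpha> \<le> b * z" if "\<alpha> \<le> z" "0 \<le> z" for z
  proof (cases "\<alpha> \<le> 0")
    case True
    then have "w * \<alpha> \<le> 0" using assms(2) by (simp add: mult_nonneg_nonpos)
    also have "0 \<le> b * z" using \<open>w \<le> b\<close> assms(2) that(2) by simp
    finally show ?thesis .
  qed (use \<open>w \<le> b\<close> assms(2) that in \<open>auto intro: mult_mono\<close>)
  then have "w * \<alpha> \<le> b * x \<and> w * \<alpha> \<le> b * y"
    using \<open>\<alpha> \<le> x\<close> \<open>\<alpha> \<le> y\<close> assms(4,5) by blast
  then show ?thesis by (simp add: agree_or_above_def)
qed auto

text \<open>Truncating at \<open>n\<close> can only change the value if at least \<open>n\<close> nonzero values, each at
  least \<open>x0\<close>, are summed.\<close>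

lemma maxsum_min_agree_or_above:
  assumes "\<forall>y\<in>#Y. 0 \<le> y" "\<forall>y\<in>#Y. y \<noteq> 0 \<longrightarrow> x0 \<le> y" "\<alpha> \<le> real n * x0"
  shows "agree_or_above \<alpha> (maxsum (min k (enat n)) Y) (maxsum k Y)"
proof (cases "k \<le> enat n \<or> size (filter_mset (\<lambda>y. y \<noteq> 0) Y) < n")
  case True
  then show ?thesis using maxsum_saturated[OF assms(1), of n k] by (auto simp: min_def)
next
  case False
  then have "\<alpha> \<le> maxsum (enat n) Y"
    using maxsum_ge_count[OF assms(1) _ assms(2)] assms(3) by (meson not_le order_trans)
  moreover have "maxsum (enat n) Y \<le> maxsum k Y"
    using False by (intro maxsum_mono[OF assms(1)]) (auto simp: not_le intro: less_imp_le)
  ultimately show ?thesis using False by (simp add: agree_or_above_def min_def)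
qed

lemma maxsum_image_agree_or_above:
  assumes "\<forall>u\<in>#S. agree_or_above \<alpha> (g u) (f u) \<and> 0 \<le> g u \<and> 0 \<le> f u"
    and "\<forall>u\<in>#S. f u \<noteq> 0 \<longrightarrow> x0 \<le> f u" "\<alpha> \<le> real n * x0"
  shows "agree_or_above \<alpha> (maxsum (min k (enat n)) (image_mset g S)) (maxsum k (image_mset f S))"
proof -
  have nonneg: "\<forall>y\<in>#image_mset g S. 0 \<le> y" "\<forall>y\<in>#image_mset f S. 0 \<le> y"
    using assms(1) by auto
  show ?thesis
  proof (cases "\<exists>u\<in>#S. g u \<noteq> f u")
    case False
    then have "image_mset g S = image_mset f S" by (auto intro: image_mset_cong)
    then show ?thesis using maxsum_min_agree_or_above[OF nonneg(2) _ assms(3)] assms(2) by simp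
  next
    case True
    then obtain u where u: "u \<in># S" "g u \<noteq> f u" by blast
    then have "\<alpha> \<le> g u" "\<alpha> \<le> f u" using assms(1) by (auto simp: agree_or_above_def)
    consider "k = 0" | "\<alpha> \<le> 0" | "k \<noteq> 0" "0 < \<alpha>" by fastforce
    then show ?thesis
    proof cases
      case 2
      then have "\<alpha> \<le> maxsum (min k (enat n)) (image_mset g S)" "\<alpha> \<le> maxsum k (image_mset f S)"
        using maxsum_nonneg[OF nonneg(1)] maxsum_nonneg[OF nonneg(2)] by (meson order_trans)+
      then show ?thesis by (simp add: agree_or_above_def)
    next
      case 3
      then have "n \<noteq> 0" using assms(3) by (cases "n = 0") auto
      then have "min k (enat n) \<noteq> 0" using 3 by (simp add: min_def zero_enat_def)
      then have "g u \<le> maxsum (min k (enat n)) (image_mset g S)" "f u \<le> maxsum k (image_mset f S)"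
        using 3 u(1) nonneg by (simp_all add: maxsum_ge_member)
      then show ?thesis using \<open>\<alpha> \<le> g u\<close> \<open>\<alpha> \<le> f u\<close> by (simp add: agree_or_above_def)
    qed simp
  qed
qed

subsection \<open>Nonnegative sets with finitely many elements below every bound\<close>

definition discrete_nonneg :: "real set \<Rightarrow> bool" where
  "discrete_nonneg S \<longleftrightarrow> S \<subseteq> {0..} \<and> (\<forall>M. finite {x \<in> S. x \<le> M})"

lemma discrete_nonneg_subset:
  assumes "discrete_nonneg R" "S \<subseteq> R"
  shows "discrete_nonneg S"
proof -
  have "{x \<in> S. x \<le> M} \<subseteq> {x \<in> R. x \<le> M}" for M using assms(2) by blast
  then show ?thesis using assms unfolding discrete_nonneg_def by (meson finite_subset order_trans)
qed

lemma discrete_nonneg_finite: "finite S \<Longrightarrow> S \<subseteq> {0..} \<Longrightarrow> discrete_nonneg S"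
  by (simp add: discrete_nonneg_def)

lemma discrete_nonneg_UN:
  assumes "finite I" "\<forall>i\<in>I. discrete_nonneg (F i)"
  shows "discrete_nonneg (\<Union>i\<in>I. F i)"
proof -
  have "{x \<in> (\<Union>i\<in>I. F i). x \<le> M} = (\<Union>i\<in>I. {x \<in> F i. x \<le> M})" for M by blast
  then show ?thesis using assms unfolding discrete_nonneg_def by auto
qed

lemma discrete_nonneg_scale:
  assumes "discrete_nonneg S" "0 \<le> c"
  shows "discrete_nonneg ((*) c ` S)"
proof (cases "c = 0")
  case True
  then have "(*) c ` S \<subseteq> {0}" by auto
  then show ?thesis by (rule discrete_nonneg_subset[OF discrete_nonneg_finite, rotated 2]) auto
next
  case False
  then have "0 < c" using assms(2) by simp
  have "{y \<in> (*) c ` S. y \<le> M} \<subseteq> (*) c ` {x \<in> S. x \<le> M / c}" for M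
    using \<open>0 < c\<close> by (auto simp: pos_le_divide_eq mult.commute)
  moreover have "finite ((*) c ` {x \<in> S. x \<le> M / c})" for M
    using assms(1) by (simp add: discrete_nonneg_def)
  moreover have "(*) c ` S \<subseteq> {0..}" using assms by (auto simp: discrete_nonneg_def)
  ultimately show ?thesis unfolding discrete_nonneg_def by (meson finite_subset)
qed

lemma discrete_nonneg_plus:
  assumes "discrete_nonneg S" "discrete_nonneg R"
  shows "discrete_nonneg {s + t | s t. s \<in> S \<and> t \<in> R}"
proof -
  have "{v \<in> {s + t | s t. s \<in> S \<and> t \<in> R}. v \<le> M}
      \<subseteq> (\<lambda>(s, t). s + t) ` ({s \<in> S. s \<le> M} \<times> {t \<in> R. t \<le> M})" for M
    using assms by (force simp: discrete_nonneg_def)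
  moreover have "finite ((\<lambda>(s, t). s + t) ` ({s \<in> S. s \<le> M} \<times> {t \<in> R. t \<le> M}))" for M
    using assms by (simp add: discrete_nonneg_def)
  moreover have "{s + t | s t. s \<in> S \<and> t \<in> R} \<subseteq> {0..}"
    using assms by (force simp: discrete_nonneg_def)
  ultimately show ?thesis unfolding discrete_nonneg_def by (meson finite_subset)
qed

lemma discrete_nonneg_sums:
  assumes "finite I" "\<forall>i\<in>I. discrete_nonneg (F i)"
  shows "discrete_nonneg {\<Sum>i\<in>I. f i | f. \<forall>i\<in>I. f i \<in> F i}"
  using assms
proof (induction I rule: finite_induct)
  case empty
  have "{\<Sum>i\<in>{}. f i | f. \<forall>i\<in>{}. f i \<in> F i} = {0}" by simp
  then show ?case by (simp add: discrete_nonneg_finite)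
next
  case (insert i I)
  let ?T = "{\<Sum>j\<in>I. f j | f. \<forall>j\<in>I. f j \<in> F j}"
  have "{\<Sum>j\<in>insert i I. f j | f. \<forall>j\<in>insert i I. f j \<in> F j} \<subseteq> {s + t | s t. s \<in> F i \<and> t \<in> ?T}"
  proof clarify
    fix f assume "\<forall>j\<in>insert i I. f j \<in> F j"
    then show "\<exists>s t. (\<Sum>j\<in>insert i I. f j) = s + t \<and> s \<in> F i \<and> t \<in> ?T"
      using insert.hyps by (intro exI[of _ "f i"] exI[of _ "\<Sum>j\<in>I. f j"]) auto
  qed
  moreover have "discrete_nonneg {s + t | s t. s \<in> F i \<and> t \<in> ?T}"
    using insert by (intro discrete_nonneg_plus) simp_all
  ultimately show ?case by (rule discrete_nonneg_subset[rotated])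
qed

lemma finite_sum_lists_below:
  fixes F :: "real set"
  assumes "finite F" "F \<subseteq> {0<..}"
  shows "finite {sum_list Q | Q. set Q \<subseteq> F \<and> sum_list Q \<le> M}"
proof (cases "F = {}")
  case True
  then have "{sum_list Q | Q. set Q \<subseteq> F \<and> sum_list Q \<le> M} \<subseteq> {0}" by auto
  then show ?thesis by (rule finite_subset) simp
next
  case False
  define m where "m = Min F"
  have "0 < m" using Min_in[OF assms(1) False] assms(2) by (auto simp: m_def)
  have "length Q \<le> nat \<lceil>M / m\<rceil>" if "set Q \<subseteq> F" "sum_list Q \<le> M" for Q
  proof -
    have "real (length Q) * m \<le> sum_list Q"
      using that(1) Min_le[OF assms(1)] by (intro length_mult_le_sum_list) (auto simp: m_def)
    then have "real (length Q) \<le> M / m" using that(2) \<open>0 < m\<close> by (simp add: pos_le_divide_eq)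
    then show ?thesis by linarith
  qed
  then have "{sum_list Q | Q. set Q \<subseteq> F \<and> sum_list Q \<le> M}
      \<subseteq> sum_list ` {Q. set Q \<subseteq> F \<and> length Q \<le> nat \<lceil>M / m\<rceil>}" by blast
  then show ?thesis using finite_lists_length_le[OF assms(1)] by (meson finite_imageI finite_subset)
qed

lemma discrete_nonneg_maxsums:
  assumes "discrete_nonneg X"
  shows "discrete_nonneg {maxsum k S | S. set_mset S \<subseteq> X}"
proof -
  have nonneg: "\<forall>y\<in>#S. 0 \<le> y" if "set_mset S \<subseteq> X" for S
    using that assms by (auto simp: discrete_nonneg_def)
  have "{v \<in> {maxsum k S | S. set_mset S \<subseteq> X}. v \<le> M}
      \<subseteq> {sum_list Q | Q. set Q \<subseteq> {x \<in> X. 0 < x \<and> x \<le> M} \<and> sum_list Q \<le> M}" for M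
  proof clarify
    fix S assume S: "set_mset S \<subseteq> X" "maxsum k S \<le> M"
    obtain Q where Q: "maxsum k S = sum_list Q" "set Q \<subseteq> set_mset S" "\<forall>q\<in>set Q. 0 < q"
      by (rule maxsum_eq_sum_list_positive[OF nonneg[OF S(1)]])
    have "q \<le> M" if "q \<in> set Q" for q
      using member_le_sum_list[OF that] Q S(2) by (simp add: less_imp_le)
    then show "\<exists>Q'. maxsum k S = sum_list Q' \<and> set Q' \<subseteq> {x \<in> X. 0 < x \<and> x \<le> M} \<and> sum_list Q' \<le> M"
      using Q S by (intro exI[of _ Q]) auto
  qed
  moreover have "finite {sum_list Q | Q. set Q \<subseteq> {x \<in> X. 0 < x \<and> x \<le> M} \<and> sum_list Q \<le> M}" for M
    using assms
    by (intro finite_sum_lists_below) (auto simp: discrete_nonneg_def intro: finite_subset[of _ "{x \<in> X. x \<le> M}"])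
  moreover have "{maxsum k S | S. set_mset S \<subseteq> X} \<subseteq> {0..}"
    using maxsum_nonneg[OF nonneg] by auto
  ultimately show ?thesis unfolding discrete_nonneg_def by (meson finite_subset)
qed

lemma discrete_nonneg_image_mono:
  assumes "discrete_nonneg S" "mono g" "\<forall>M. \<exists>z. M < g z" "\<forall>x. 0 \<le> g x"
  shows "discrete_nonneg (g ` S)"
proof -
  have "finite {y \<in> g ` S. y \<le> M}" for M
  proof -
    obtain z where "M < g z" using assms(3) by blast
    have "x \<le> z" if "g x \<le> M" for x
    proof (rule ccontr)
      assume "\<not> x \<le> z"
      then have "g z \<le> g x" using monoD[OF assms(2)] by simp
      then show False using that \<open>M < g z\<close> by simp
    qed
    then have "{y \<in> g ` S. y \<le> M} \<subseteq> g ` {x \<in> S. x \<le> z}" by blast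
    moreover have "finite (g ` {x \<in> S. x \<le> z})" using assms(1) by (simp add: discrete_nonneg_def)
    ultimately show ?thesis by (rule finite_subset)
  qed
  then show ?thesis using assms(4) by (auto simp: discrete_nonneg_def)
qed

lemma lnz_least:
  assumes "has_lnz S"
  shows "lnz S \<in> S - {0}" "x \<in> S \<Longrightarrow> x \<noteq> 0 \<Longrightarrow> lnz S \<le> x"
proof -
  obtain y where y: "y \<in> S - {0}" "\<forall>x\<in>S - {0}. y \<le> x" using assms unfolding has_lnz_def by blast
  have "lnz S = y" unfolding lnz_def by (rule the_equality) (use y in \<open>auto intro: antisym\<close>)
  then show "lnz S \<in> S - {0}" "x \<in> S \<Longrightarrow> x \<noteq> 0 \<Longrightarrow> lnz S \<le> x" using y by auto
qed

lemma lnz_pos: "has_lnz S \<Longrightarrow> S \<subseteq> {0..} \<Longrightarrow> 0 < lnz S"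
  using lnz_least(1) by force

lemma has_lnz_if_discrete_nonneg:
  assumes "discrete_nonneg S" "S - {0} \<noteq> {}"
  shows "has_lnz S"
proof -
  obtain s where s: "s \<in> S - {0}" using assms(2) by blast
  define F where "F = {x \<in> S - {0}. x \<le> s}"
  have "finite F" using assms(1) unfolding discrete_nonneg_def F_def
    by (auto intro: finite_subset[of _ "{x \<in> S. x \<le> s}"])
  moreover have "s \<in> F" using s by (simp add: F_def)
  ultimately have "Min F \<in> S - {0}" "Min F \<le> s"
    using Min_in[of F] Min_le[of F] by (auto simp: F_def)
  moreover have "Min F \<le> y" if "y \<in> S - {0}" for y
  proof (cases "y \<le> s")
    case True
    then show ?thesis using that Min_le[OF \<open>finite F\<close>] by (simp add: F_def)
  qed (use \<open>Min F \<le> s\<close> in simp)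
  ultimately show ?thesis unfolding has_lnz_def by blast
qed

subsection \<open>Running a monotonic max-sum GNN\<close>

definition boolean_labels :: "('c, 'v) graph \<Rightarrow> bool" where
  "boolean_labels G \<longleftrightarrow> (\<forall>u j. label G u j = 0 \<or> label G u j = 1)"

lemma run_nonneg:
  assumes "\<forall>x. 0 \<le> act M x" "boolean_labels G"
  shows "0 \<le> run M G l u j"
  using assms by (induction l arbitrary: u j) (auto simp: boolean_labels_def, metis order_refl zero_le_one)

lemma bmin_le_bias: "i < dim N l \<Longrightarrow> bmin N l \<le> bias N l i"
  unfolding bmin_def by (intro Min_le) auto

lemma alpha_step_None_mono:
  "alpha_step N k t m = None \<Longrightarrow> m \<le> m' \<Longrightarrow> alpha_step N k t m' = None"
proof (induction m')
  case (Suc m')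
  then show ?case by (cases "m = Suc m'") (auto simp: le_Suc_eq)
qed simp

lemma le_nat_ceiling_divide_mult:
  fixes x y :: real
  assumes "0 < x"
  shows "y \<le> real (nat \<lceil>y / x\<rceil>) * x"
proof -
  have "y / x \<le> real (nat \<lceil>y / x\<rceil>)" by linarith
  then show ?thesis using assms by (simp add: pos_divide_le_eq)
qed

locale monotonic_maxsum_gnn =
  fixes N :: "('c::finite) gnn" and \<delta> :: nat and k :: "nat \<Rightarrow> enat" and t :: real
  assumes monotonic: "monotonic_maxsum N \<delta> k t"
begin

abbreviation capped :: "'c gnn" where
  "capped \<equiv> N\<lparr>agg := (\<lambda>l. maxsum (cap N k t l))\<rparr>"

lemma A_nonneg: "l \<in> {1..layers N} \<Longrightarrow> i < dim N l \<Longrightarrow> j < dim N (l - 1) \<Longrightarrow> 0 \<le> A N l i j"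
  using monotonic by (auto simp: monotonic_maxsum_def)

lemma B_nonneg: "l \<in> {1..layers N} \<Longrightarrow> i < dim N l \<Longrightarrow> j < dim N (l - 1) \<Longrightarrow> 0 \<le> B N l c i j"
  using monotonic by (auto simp: monotonic_maxsum_def)

lemma agg_eq: "l \<in> {1..layers N} \<Longrightarrow> agg N l = maxsum (k l)"
  using monotonic by (auto simp: monotonic_maxsum_def)

lemma act_mono: "mono (act N)"
  using monotonic by (simp add: monotonic_maxsum_def)

lemma act_nonneg: "0 \<le> act N x"
proof -
  have "act N x \<in> range (act N)" by simp
  then show ?thesis using monotonic by (auto simp: monotonic_maxsum_def)
qed

lemma act_unbounded: "\<exists>z. M < act N z"
  using monotonic unfolding monotonic_maxsum_def bdd_above_def by (auto simp: not_le)

lemma cls_iff: "cls N x \<longleftrightarrow> t \<le> x"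
  using monotonic by (simp add: monotonic_maxsum_def)

lemma beta_le: "a \<le> act N (real (beta N a))"
proof -
  obtain z where z: "a < act N z" using act_unbounded by blast
  have "z \<le> real (nat \<lceil>z\<rceil>)" by linarith
  then have "act N z \<le> act N (real (nat \<lceil>z\<rceil>))" by (rule monoD[OF act_mono])
  then have "\<exists>n. a \<le> act N (real n)" using z by (meson less_le_trans less_imp_le)
  then show ?thesis unfolding beta_def by (rule LeastI_ex)
qed

lemma run_in_Xset:
  assumes "boolean_labels G"
  shows "l \<le> layers N \<Longrightarrow> i < dim N l \<Longrightarrow> run N G l u i \<in> Xset N k l i"
proof (induction l arbitrary: u i)
  case 0
  then show ?case using assms by (auto simp: boolean_labels_def)
next
  case (Suc p)
  define Y where "Y c = image_mset (run N G p) (mset_set {v. (u, v) \<in> edges G c})" for c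
  have "run N G (Suc p) u i = act N (Val N k (Suc p) i (run N G p u) Y)"
    using Suc.prems agg_eq[of "Suc p"]
    by (simp add: Val_def Y_def multiset.map_comp o_def)
  moreover have "\<forall>j<dim N p. run N G p u j \<in> Xset N k p j" using Suc by simp
  moreover have "\<forall>c y j. y \<in># Y c \<and> j < dim N p \<longrightarrow> y j \<in> Xset N k p j"
    using Suc by (auto simp: Y_def)
  ultimately show ?case by (simp only: Xset.simps) blast
qed

lemma run_capped_in_Xset:
  assumes "boolean_labels G"
  shows "l \<le> layers N \<Longrightarrow> \<forall>l'\<in>{1..l}. cap N k t l' = 0 \<Longrightarrow> i < dim N l
    \<Longrightarrow> run capped G l u i \<in> Xset N k l i"
proof (induction l arbitrary: u i)
  case 0
  then show ?case using assms by (auto simp: boolean_labels_def)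
next
  case (Suc p)
  \<comment> \<open>With capacity \<open>0\<close> the aggregation vanishes, as it does for empty neighbourhoods.\<close>
  have "cap N k t (Suc p) = 0" using Suc.prems(2) by simp
  then have "run capped G (Suc p) u i = act N (Val N k (Suc p) i (run capped G p u) (\<lambda>c. {#}))"
    using Suc.prems(3) by (simp add: Val_def)
  moreover have "\<forall>j<dim N p. run capped G p u j \<in> Xset N k p j" using Suc by simp
  ultimately show ?case by (simp only: Xset.simps) fastforce
qed

lemma Xset_discrete: "m \<le> layers N \<Longrightarrow> i < dim N m \<Longrightarrow> discrete_nonneg (Xset N k m i)"
proof (induction m arbitrary: i)
  case 0
  then show ?case by (simp add: discrete_nonneg_finite)
next
  case (Suc p)
  define d where "d = dim N p"
  define b where "b = bias N (Suc p) i"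
  define SA where "SA = {\<Sum>j\<in>{..<d}. f j | f. \<forall>j\<in>{..<d}. f j \<in> (*) (A N (Suc p) i j) ` Xset N k p j}"
  define SB where "SB = {\<Sum>c\<in>UNIV. g c | g. \<forall>c\<in>UNIV. g c \<in> {\<Sum>j\<in>{..<d}. h j | h. \<forall>j\<in>{..<d}.
    h j \<in> (*) (B N (Suc p) c i j) ` {maxsum (k (Suc p)) S | S. set_mset S \<subseteq> Xset N k p j}}}"
  have l: "Suc p \<in> {1..layers N}" using Suc.prems by simp
  have X: "\<forall>j\<in>{..<d}. discrete_nonneg (Xset N k p j)" using Suc by (simp add: d_def)
  have "discrete_nonneg SA"
    unfolding SA_def using X A_nonneg[OF l Suc.prems(2)]
    by (intro discrete_nonneg_sums ballI discrete_nonneg_scale) (auto simp: d_def)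
  moreover have "discrete_nonneg SB"
    unfolding SB_def using X B_nonneg[OF l Suc.prems(2)]
    by (intro discrete_nonneg_sums ballI discrete_nonneg_scale discrete_nonneg_maxsums)
      (auto simp: d_def)
  moreover have "mono (\<lambda>v. act N (v + b))" using monoD[OF act_mono] by (intro monoI) simp
  moreover have "\<forall>M. \<exists>z. M < act N (z + b)" using act_unbounded by (metis diff_add_cancel)
  ultimately have "discrete_nonneg ((\<lambda>v. act N (v + b)) ` {s + s' | s s'. s \<in> SA \<and> s' \<in> SB})"
    by (intro discrete_nonneg_image_mono discrete_nonneg_plus) (auto simp: act_nonneg)
  moreover have "Xset N k (Suc p) i \<subseteq> (\<lambda>v. act N (v + b)) ` {s + s' | s s'. s \<in> SA \<and> s' \<in> SB}"
  proof
    fix v assume "v \<in> Xset N k (Suc p) i"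
    then obtain x and Y :: "'c \<Rightarrow> (nat \<Rightarrow> real) multiset"
      where v: "v = act N (Val N k (Suc p) i x Y)" and x: "\<forall>j<dim N p. x j \<in> Xset N k p j"
        and Y: "\<forall>c y j. y \<in># Y c \<and> j < dim N p \<longrightarrow> y j \<in> Xset N k p j"
      by auto
    define M where "M c j = maxsum (k (Suc p)) (image_mset (\<lambda>y. y j) (Y c))" for c j
    have "(\<Sum>j<d. A N (Suc p) i j * x j) \<in> SA" using x by (auto simp: SA_def d_def)
    moreover have "(\<Sum>c\<in>UNIV. \<Sum>j<d. B N (Suc p) c i j * M c j) \<in> SB"
      unfolding SB_def M_def using Y by (fastforce simp: d_def)
    ultimately show "v \<in> (\<lambda>v. act N (v + b)) ` {s + s' | s s'. s \<in> SA \<and> s' \<in> SB}"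
      by (auto simp: v Val_def M_def b_def d_def)
  qed
  ultimately show ?case by (rule discrete_nonneg_subset)
qed

lemma weights_discrete:
  assumes "l \<in> {1..layers N}"
  shows "discrete_nonneg (weights N l)"
proof (rule discrete_nonneg_finite)
  have "weights N l \<subseteq> (\<lambda>(i, j). A N l i j) ` ({..<dim N l} \<times> {..<dim N (l - 1)})
      \<union> (\<lambda>(c, i, j). B N l c i j) ` (UNIV \<times> {..<dim N l} \<times> {..<dim N (l - 1)})"
    unfolding weights_def by force
  then show "finite (weights N l)" by (rule finite_subset) simp
  show "weights N l \<subseteq> {0..}"
    using A_nonneg[OF assms] B_nonneg[OF assms] unfolding weights_def by auto
qed

lemma xs_set_discrete: "l \<in> {1..layers N} \<Longrightarrow> discrete_nonneg (xs_set N k l)"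
  unfolding xs_set_def by (intro discrete_nonneg_UN ballI Xset_discrete) auto

lemma weight_eq_0_or_ge_lnz:
  assumes "cap_ok N k l" "i < dim N l" "j < dim N (l - 1)"
  shows "A N l i j = 0 \<or> lnz (weights N l) \<le> A N l i j"
    and "B N l c i j = 0 \<or> lnz (weights N l) \<le> B N l c i j"
  using assms lnz_least(2)[of "weights N l"] unfolding cap_ok_def weights_def by blast+

lemma lnz_xs_set_le_run:
  assumes "boolean_labels G" "Suc p \<le> layers N" "cap_ok N k (Suc p)" "j < dim N p"
  shows "\<forall>v. run N G p v j \<noteq> 0 \<longrightarrow> lnz (xs_set N k (Suc p)) \<le> run N G p v j"
  using assms run_in_Xset[OF assms(1), of p j] lnz_least(2)[of "xs_set N k (Suc p)"]
  unfolding cap_ok_def xs_set_def by auto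

text \<open>The inductive step: if the inputs of layer \<open>\<ell> = Suc p\<close> agree up to \<open>\<alpha>\<^sub>\<ell>\<^sub>-\<^sub>1\<close>, every
  summand of the pre-activation agrees up to \<open>\<beta>\<^sub>\<ell> - b\<^sub>\<ell>\<^sup>m\<^sup>i\<^sup>n = w\<^sub>\<ell> \<alpha>\<^sub>\<ell>\<^sub>-\<^sub>1\<close>.\<close>

lemma run_Suc_capped_agree_or_above:
  assumes G: "boolean_labels G" and p: "Suc p \<le> layers N" and ok: "cap_ok N k (Suc p)"
    and cap: "cap N k t (Suc p) = min (k (Suc p)) (enat n)"
    and n: "\<alpha> \<le> real n * lnz (xs_set N k (Suc p))"
    and \<alpha>: "\<alpha> = (real (beta N a) - bmin N (Suc p)) / lnz (weights N (Suc p))"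
    and IH: "\<forall>v j. agree_or_above \<alpha> (run capped G p v j) (run N G p v j)"
  shows "agree_or_above a (run capped G (Suc p) u i) (run N G (Suc p) u i)"
proof (cases "i < dim N (Suc p)")
  case True
  define w where "w = lnz (weights N (Suc p))"
  define nbs where "nbs c = mset_set {v. (u, v) \<in> edges G c}" for c
  have l: "Suc p \<in> {1..layers N}" using p by simp
  have "0 < w" using lnz_pos ok weights_discrete[OF l] by (simp add: w_def cap_ok_def discrete_nonneg_def)
  then have w\<alpha>: "w * \<alpha> = real (beta N a) - bmin N (Suc p)" by (simp add: \<alpha> w_def)
  have nonneg: "0 \<le> run N G p v j" "0 \<le> run capped G p v j" for v j
    using run_nonneg[OF _ G] act_nonneg by simp_all
  have weights: "A N (Suc p) i j = 0 \<or> w \<le> A N (Suc p) i j" "B N (Suc p) c i j = 0 \<or> w \<le> B N (Suc p) c i j"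
    if "j < dim N p" for c j using weight_eq_0_or_ge_lnz[OF ok True] that by (simp_all add: w_def)
  have "agree_or_above \<alpha> (maxsum (cap N k t (Suc p)) (image_mset (\<lambda>v. run capped G p v j) (nbs c)))
      (maxsum (k (Suc p)) (image_mset (\<lambda>v. run N G p v j) (nbs c)))" if "j < dim N p" for c j
    unfolding cap using IH nonneg lnz_xs_set_le_run[OF G p ok that] n
    by (intro maxsum_image_agree_or_above) auto
  then have "agree_or_above (w * \<alpha>)
      ((\<Sum>j<dim N p. A N (Suc p) i j * run capped G p u j)
        + (\<Sum>c\<in>UNIV. \<Sum>j<dim N p. B N (Suc p) c i j
            * maxsum (cap N k t (Suc p)) (image_mset (\<lambda>v. run capped G p v j) (nbs c))))
      ((\<Sum>j<dim N p. A N (Suc p) i j * run N G p u j)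
        + (\<Sum>c\<in>UNIV. \<Sum>j<dim N p. B N (Suc p) c i j
            * maxsum (k (Suc p)) (image_mset (\<lambda>v. run N G p v j) (nbs c))))"
    (is "agree_or_above _ ?x' ?x")
    using IH nonneg weights \<open>0 < w\<close> A_nonneg[OF l True] B_nonneg[OF l True]
    by (intro agree_or_above_add agree_or_above_sum ballI conjI agree_or_above_scale
        sum_nonneg mult_nonneg_nonneg maxsum_nonneg) (auto intro: order_trans)
  then have "agree_or_above (real (beta N a)) (?x' + bias N (Suc p) i) (?x + bias N (Suc p) i)"
    using bmin_le_bias[OF True] unfolding w\<alpha>
    by (auto intro: agree_or_above_threshold_mono agree_or_above_add_const)
  then have "agree_or_above a (act N (?x' + bias N (Suc p) i)) (act N (?x + bias N (Suc p) i))"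
    using beta_le by (auto intro: agree_or_above_threshold_mono agree_or_above_mono_fun[OF act_mono])
  then show ?thesis using True agg_eq[OF l] by (simp add: nbs_def)
qed simp

lemma run_Suc_capped_eq_run_if_stopped:
  assumes G: "boolean_labels G" and p: "Suc p \<le> layers N" and stop: "\<not> cap_ok N k (Suc p)"
    and caps: "\<forall>l\<in>{1..Suc p}. cap N k t l = 0"
  shows "run capped G (Suc p) u i = run N G (Suc p) u i"
proof (cases "i < dim N (Suc p)")
  case True
  have l: "Suc p \<in> {1..layers N}" using p by simp
  have cap: "cap N k t (Suc p) = 0" using caps by simp
  consider "weights N (Suc p) \<subseteq> {0}" | "xs_set N k (Suc p) \<subseteq> {0}"
    using stop has_lnz_if_discrete_nonneg weights_discrete[OF l] xs_set_discrete[OF l]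
    unfolding cap_ok_def by blast
  then show ?thesis
  proof cases
    case 1
    moreover have "A N (Suc p) i j \<in> weights N (Suc p)" "B N (Suc p) c i j \<in> weights N (Suc p)"
      if "j < dim N p" for c j
      using True that unfolding weights_def by (simp, blast)+
    ultimately have "A N (Suc p) i j = 0" "B N (Suc p) c i j = 0" if "j < dim N p" for c j
      using that by blast+
    then show ?thesis using True by simp
  next
    case 2
    then have zero: "run N G p v j = 0" "run capped G p v j = 0" if "j < dim N p" for v j
      using run_in_Xset[OF G, of p j v] run_capped_in_Xset[OF G, of p j v] that p caps
      unfolding xs_set_def by auto
    have "maxsum (k (Suc p)) (image_mset (\<lambda>v. run N G p v j) S) = 0" if "j < dim N p" for S j
      using zero(1)[OF that] by (intro maxsum_all_zero) auto
    moreover have "(\<Sum>j<dim N p. A N (Suc p) i j * run capped G p u j)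
        = (\<Sum>j<dim N p. A N (Suc p) i j * run N G p u j)"
      using zero by (intro sum.cong) simp_all
    ultimately show ?thesis using True agg_eq[OF l] cap by simp
  qed
qed simp

lemma run_capped_agree_or_above:
  assumes G: "boolean_labels G"
  shows "l \<le> layers N \<Longrightarrow> alpha_step N k t (layers N - l) = Some a
    \<Longrightarrow> agree_or_above a (run capped G l u i) (run N G l u i)"
proof (induction l arbitrary: a u i)
  case (Suc p)
  have step: "layers N - p = Suc (layers N - Suc p)" "layers N - (layers N - Suc p) = Suc p"
    using Suc.prems(1) by simp_all
  show ?case
  proof (cases "cap_ok N k (Suc p)")
    case True
    define \<alpha> where "\<alpha> = (real (beta N a) - bmin N (Suc p)) / lnz (weights N (Suc p))"
    define x where "x = lnz (xs_set N k (Suc p))"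
    have "alpha_step N k t (layers N - p) = Some \<alpha>"
      using Suc.prems(2) True by (simp add: step \<alpha>_def)
    then have IH: "\<forall>v j. agree_or_above \<alpha> (run capped G p v j) (run N G p v j)"
      using Suc.IH Suc.prems(1) by simp
    have cap: "cap N k t (Suc p) = min (k (Suc p)) (enat (nat \<lceil>\<alpha> / x\<rceil>))"
      using Suc.prems(2) True by (simp add: cap_def \<alpha>_def x_def)
    have "0 < x" using lnz_pos True xs_set_discrete[of "Suc p"] Suc.prems(1)
      by (simp add: x_def cap_ok_def discrete_nonneg_def)
    then show ?thesis
      using run_Suc_capped_agree_or_above[OF G Suc.prems(1) True cap _ \<alpha>_def IH]
        le_nat_ceiling_divide_mult by (simp add: x_def)
  next
    case False
    then have "alpha_step N k t (layers N - p) = None"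
      using Suc.prems(2) by (simp add: step)
    then have "alpha_step N k t (layers N - l) = None" if "l \<le> p" for l
      using alpha_step_None_mono that by (meson diff_le_mono2)
    then have "\<forall>l\<in>{1..Suc p}. cap N k t l = 0"
      using Suc.prems(2) False by (auto simp: cap_def le_Suc_eq)
    then show ?thesis using run_Suc_capped_eq_run_if_stopped[OF G Suc.prems(1) False] by simp
  qed
qed simp

end

theorem theorem2:
  fixes N :: "('c::finite) gnn" and \<delta> :: nat and k :: "nat \<Rightarrow> enat" and t :: real
    and D :: "('c, 'a) fact set"
  assumes "monotonic_maxsum N \<delta> k t"
    and "is_dataset \<delta> D"
  shows "T N \<delta> D = T (N\<lparr>agg := (\<lambda>l. maxsum (cap N k t l))\<rparr>) \<delta> D"
proof -
  interpret monotonic_maxsum_gnn N \<delta> k t by standard (rule assms(1))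
  let ?G = "enc \<delta> D :: ('c, 'a) graph"
  have "boolean_labels ?G" by (simp add: boolean_labels_def enc_def)
  then have agree: "agree_or_above t (run capped ?G (layers N) v i) (run N ?G (layers N) v i)" for v i
    by (rule run_capped_agree_or_above) simp_all
  have "cls N (run capped ?G (layers N) v i) \<longleftrightarrow> cls N (run N ?G (layers N) v i)" for v i
    using agree[of v i] unfolding cls_iff agree_or_above_def by auto
  then have "apply_gnn capped ?G = apply_gnn N ?G" by (simp add: apply_gnn_def)
  then show ?thesis by (simp add: T_def)
qed

end
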